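(* The combinatorial tiling $K$ has finite local complexity: for every $r>0$ there are only finitely many patches of $K$ of edge-diameter less than $r$, up to cell-preserving isomorphisms between subcomplexes of $K$.
   Context: A combinatorial tiling is a 2-dimensional CW-complex whose underlying space is homeomorphic to the open unit disk; faces are closed 2-cells, edges closed 1-cells, vertices 0-cells. The subdivision rule $\omega$ acts on a pentagon (closed disk with five boundary vertices $v_1,\dots,v_5$ in cyclic order, indices mod 5): add a vertex $m_i$ in the interior of each edge $v_iv_{i+1}$, five interior vertices $c_1,\dots,c_5$, edges $c_ic_{i+1}$ and $c_im_i$; the face is replaced by the central pentagon $c_1\cdots c_5$ and the five petals $v_i\,m_i\,c_i\,c_{i-1}\,m_{i-1}$. Applying $\omega$ to every face gives the subdivision of a complex. $K_0$ is one pentagon, $K_n=\omega^n(K_0)$, $\iota_n:K_n\to K_{n+1}$ is the embedding of $K_n$ onto the central superpentagon $\omega^n(\text{central face of }\omega(K_0))$ of $K_{n+1}$ (central pentagon to central pentagon), and $K$ is the direct limit of $(K_n,\iota_n)$ (undecorated). A patch is a 2-dimensional subcomplex with finitely many cells that is a union of faces connected through chains of faces sharing edges. Edge-diameter is measured with the edge-path distance between vertices. *)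

theory Defs
  imports Complex_Main "HOL-Library.FSet"
begin

text \<open>Base i: the five vertices of K0; Mid S: the vertex inserted
 in the interior of the edge with endpoint set S; Cen F i: the interior vertex c_i
 created when subdividing the face F (a face is the cyclic list of its 5 vertices).\<close>
datatype vx = Base nat | Mid "vx fset" | Cen "vx list" nat

type_synonym face = "vx list"

definition F0 :: face where "F0 = map Base [0..<5]"

definition omega_face :: "face \<Rightarrow> face set" where
  "omega_face F =
     (let m = (\<lambda>i. Mid {|F ! (i mod 5), F ! ((i + 1) mod 5)|});
          c = (\<lambda>i. Cen F (i mod 5))
      in insert (map c [0..<5])
           ((\<lambda>i. [F ! i, m i, c i, c (i + 4), m (i + 4)]) ` {0..<5}))"

definition omega :: "face set \<Rightarrow> face set" where
  "omega C = \<Union> (omega_face ` C)"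

definition Kn :: "nat \<Rightarrow> face set" where
  "Kn n = (omega ^^ n) {F0}"

definition verts :: "face set \<Rightarrow> vx set" where
  "verts C = \<Union> (set ` C)"

text \<open>The embedding iota_n : K_n \<rightarrow> K_(n+1) onto the central superpentagon, as a
 renaming of vertices (it is the same renaming for every n): v_i \<mapsto> c_i of the central
 face of omega(K0), extended structurally.\<close>
primrec rho :: "vx \<Rightarrow> vx" where
  "rho (Base i) = Cen F0 i"
| "rho (Mid S) = Mid (fimage rho S)"
| "rho (Cen L i) = Cen (map rho L) i"

text \<open>Direct limit: (n,v) and (m,w) are identified iff they have the same image in K_(n+m).\<close>
definition lim_eq :: "nat \<times> vx \<Rightarrow> nat \<times> vx \<Rightarrow> bool" where
  "lim_eq p q = ((rho ^^ fst q) (snd p) = (rho ^^ fst p) (snd q))"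

type_synonym kvert = "(nat \<times> vx) set"

definition Kcls :: "nat \<Rightarrow> vx \<Rightarrow> kvert" where
  "Kcls n v = {q. lim_eq (n, v) q}"

definition KF :: "kvert list set" where
  "KF = {map (Kcls n) F | n F. F \<in> Kn n}"

definition face_edges :: "kvert list \<Rightarrow> kvert set set" where
  "face_edges P = {{P ! i, P ! ((i + 1) mod 5)} | i. i < 5}"

definition KE :: "kvert set set" where
  "KE = \<Union> (face_edges ` KF)"

definition kwalk :: "kvert list \<Rightarrow> bool" where
  "kwalk xs = (\<forall>i. Suc i < length xs \<longrightarrow> {xs ! i, xs ! Suc i} \<in> KE)"

definition kdist :: "kvert \<Rightarrow> kvert \<Rightarrow> nat" where
  "kdist u v = (LEAST k. \<exists>xs. kwalk xs \<and> xs \<noteq> [] \<and> hd xs = u \<and> last xs = v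
                              \<and> length xs = Suc k)"

definition pverts :: "kvert list set \<Rightarrow> kvert set" where
  "pverts P = \<Union> (set ` P)"

definition pedges :: "kvert list set \<Rightarrow> kvert set set" where
  "pedges P = \<Union> (face_edges ` P)"

definition face_adj :: "kvert list \<Rightarrow> kvert list \<Rightarrow> bool" where
  "face_adj A B = (face_edges A \<inter> face_edges B \<noteq> {})"

text \<open>A patch: finite nonempty set of faces of K, connected through chains of faces
 sharing edges (the patch is the subcomplex formed by these faces with their edges and vertices).\<close>
definition patch :: "kvert list set \<Rightarrow> bool" where
  "patch P = (P \<subseteq> KF \<and> finite P \<and> P \<noteq> {} \<and>
     (\<forall>A\<in>P. \<forall>B\<in>P. (A, B) \<in> {(X, Y). X \<in> P \<and> Y \<in> P \<and> face_adj X Y}\<^sup>*))"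

definition ediam_lt :: "kvert list set \<Rightarrow> real \<Rightarrow> bool" where
  "ediam_lt P r = (\<forall>u\<in>pverts P. \<forall>v\<in>pverts P. real (kdist u v) < r)"

definition patch_iso :: "kvert list set \<Rightarrow> kvert list set \<Rightarrow> bool" where
  "patch_iso P Q = (\<exists>f. bij_betw f (pverts P) (pverts Q)
      \<and> (\<lambda>e. f ` e) ` pedges P = pedges Q
      \<and> (\<lambda>A. f ` set A) ` P = set ` Q)"

end

(* Every vertex has a level, the subdivision step in which it is created. Levels separate
   the vertices of a face of K_n from those inserted when the face is subdivided, so one
   subdivision step can be analysed face by face. By induction on n, a vertex of K_n lies in
   at most 36 faces and two distinct vertices lie in at most 6 common faces. Since rho embeds
   K_n into K_(n+1), the vertex bound passes to the direct limit K, so the vertices within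
   edge distance k of a vertex number at most 181^k. A patch of edge-diameter less than r is
   connected and therefore lies in such a ball; numbering its vertices turns it into a set of
   words of length 5 over a fixed finite alphabet, and patches with equal codes are isomorphic. *)

theory Submission
  imports Defs
begin

section \<open>Levels and a single subdivision step\<close>

primrec level :: "vx \<Rightarrow> nat" where
  "level (Base i) = 0"
| "level (Mid S) = Suc (Max (insert 0 (fset (fimage level S))))"
| "level (Cen L i) = Suc (Max (insert 0 (set (map level L))))"

lemma omega_face_explicit:
  "omega_face [a0,a1,a2,a3,a4] =
    (let m = \<lambda>x y. Mid {|x,y|}; c = Cen [a0,a1,a2,a3,a4] in
    {[c 0, c 1, c 2, c 3, c 4],
     [a0, m a0 a1, c 0, c 4, m a4 a0],
     [a1, m a1 a2, c 1, c 0, m a0 a1],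
     [a2, m a2 a3, c 2, c 1, m a1 a2],
     [a3, m a3 a4, c 3, c 2, m a2 a3],
     [a4, m a4 a0, c 4, c 3, m a3 a4]})"
proof -
  have "{0..<5::nat} = {0,1,2,3,4}" "[0..<5] = [0,1,2,3,4::nat]" by (auto simp: upt_rec)
  then show ?thesis unfolding omega_face_def Let_def by simp
qed

(* The invariant of the faces of K_n: their vertices have level at most n and every edge has an
   endpoint of level exactly n, so all vertices inserted by subdividing the face have level n + 1. *)
definition good :: "nat \<Rightarrow> vx list \<Rightarrow> bool" where
  "good n F \<longleftrightarrow> length F = 5 \<and> distinct F \<and> (\<forall>v\<in>set F. level v \<le> n) \<and>
      (\<forall>i<5. max (level (F ! i)) (level (F ! (Suc i mod 5))) = n)"

lemma good_explicit:
  "good n [a0,a1,a2,a3,a4] \<longleftrightarrow> distinct [a0,a1,a2,a3,a4] \<and>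
     level a0 \<le> n \<and> level a1 \<le> n \<and> level a2 \<le> n \<and> level a3 \<le> n \<and> level a4 \<le> n \<and>
     max (level a0) (level a1) = n \<and> max (level a1) (level a2) = n \<and> max (level a2) (level a3) = n \<and>
     max (level a3) (level a4) = n \<and> max (level a4) (level a0) = n"
proof -
  have all_less_5: "(\<forall>i::nat<5. P i) \<longleftrightarrow> P 0 \<and> P 1 \<and> P 2 \<and> P 3 \<and> P 4" for P
    by (auto simp: less_Suc_eq numeral_eq_Suc)
  show ?thesis unfolding good_def all_less_5 by auto
qed

lemma length_5_cases:
  assumes "length G = 5"
  obtains a0 a1 a2 a3 a4 where "G = [a0,a1,a2,a3,a4]"
  using assms by (auto simp: numeral_eq_Suc length_Suc_conv)

lemma good_length: "good n G \<Longrightarrow> length G = 5"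
  by (simp add: good_def)

lemma good_cases [consumes 1, case_names pentagon]:
  assumes "good n G"
  obtains a0 a1 a2 a3 a4 where "G = [a0,a1,a2,a3,a4]" "good n [a0,a1,a2,a3,a4]"
  using assms length_5_cases[OF good_length[OF assms]] by metis

lemma fdoubleton_eq_iff:
  "{|a,b|} = {|c,d|} \<longleftrightarrow> a = c \<and> b = d \<or> a = d \<and> b = c"
proof -
  have "{|a,b|} = {|c,d|} \<longleftrightarrow> {a,b} = {c,d}"
    by (metis fset_inject finsert.rep_eq bot_fset.rep_eq)
  then show ?thesis by (simp add: doubleton_eq_iff)
qed

definition mids :: "vx list \<Rightarrow> vx set" where
  "mids G = (\<lambda>k. Mid {|G ! k, G ! (Suc k mod 5)|}) ` {..<5}"

definition cens :: "vx list \<Rightarrow> vx set" where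
  "cens G = Cen G ` {..<5}"

lemma mids_explicit:
  "mids [a0,a1,a2,a3,a4] = {Mid {|a0,a1|}, Mid {|a1,a2|}, Mid {|a2,a3|}, Mid {|a3,a4|}, Mid {|a4,a0|}}"
  and cens_explicit: "cens G = {Cen G 0, Cen G 1, Cen G 2, Cen G 3, Cen G 4}"
proof -
  have "{..<5::nat} = {0,1,2,3,4}" by auto
  then show "mids [a0,a1,a2,a3,a4] = {Mid {|a0,a1|}, Mid {|a1,a2|}, Mid {|a2,a3|}, Mid {|a3,a4|}, Mid {|a4,a0|}}"
    and "cens G = {Cen G 0, Cen G 1, Cen G 2, Cen G 3, Cen G 4}"
    unfolding mids_def cens_def by simp_all
qed

lemma good_level_old: "good n G \<Longrightarrow> v \<in> set G \<Longrightarrow> level v \<le> n"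
  by (simp add: good_def)

lemma good_level_new:
  assumes "good n G" "v \<in> mids G \<union> cens G"
  shows "level v = Suc n"
  using assms
proof (cases rule: good_cases)
  case (pentagon a0 a1 a2 a3 a4)
  then have "Max (insert 0 (level ` set G)) = n"
    by (intro Max_eqI) (auto simp: good_explicit max_def split: if_splits)
  moreover have "max (level a0) (level a1) = n" "max (level a1) (level a2) = n"
    "max (level a2) (level a3) = n" "max (level a3) (level a4) = n" "max (level a4) (level a0) = n"
    using pentagon by (simp_all add: good_explicit)
  ultimately show ?thesis
    using assms(2) unfolding pentagon(1) mids_explicit cens_explicit
    by (elim UnE insertE emptyE) simp_all
qed

lemma good_distinct_vertices:
  assumes "good n [a0,a1,a2,a3,a4]"
  shows "distinct [a0, a1, a2, a3, a4,
      Mid {|a0,a1|}, Mid {|a1,a2|}, Mid {|a2,a3|}, Mid {|a3,a4|}, Mid {|a4,a0|},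
      Cen [a0,a1,a2,a3,a4] 0, Cen [a0,a1,a2,a3,a4] 1, Cen [a0,a1,a2,a3,a4] 2,
      Cen [a0,a1,a2,a3,a4] 3, Cen [a0,a1,a2,a3,a4] 4]"
proof -
  let ?G = "[a0,a1,a2,a3,a4]"
  let ?M = "[Mid {|a0,a1|}, Mid {|a1,a2|}, Mid {|a2,a3|}, Mid {|a3,a4|}, Mid {|a4,a0|}]"
  let ?C = "map (Cen ?G) [0,1,2,3,4]"
  have dG: "distinct ?G" using assms by (simp add: good_explicit)
  then have dM: "distinct ?M" by (auto simp: fdoubleton_eq_iff)
  have "set (?M @ ?C) = mids ?G \<union> cens ?G" by (auto simp: mids_explicit cens_explicit)
  then have "set ?G \<inter> set (?M @ ?C) = {}"
    using good_level_old[OF assms] good_level_new[OF assms] by fastforce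
  moreover have "set ?M \<inter> set ?C = {}" "distinct ?C" by auto
  ultimately have "distinct (?G @ ?M @ ?C)" using dG dM by (simp only: distinct_append)
  then show ?thesis by simp
qed

lemma omega_face_vertices:
  assumes "length G = 5" "F \<in> omega_face G"
  shows "set F \<subseteq> set G \<union> mids G \<union> cens G"
proof -
  obtain a0 a1 a2 a3 a4 where G: "G = [a0,a1,a2,a3,a4]" using assms(1) by (rule length_5_cases)
  show ?thesis using assms(2) unfolding G omega_face_explicit Let_def mids_explicit cens_explicit
    by auto
qed

lemma omega_face_good:
  assumes "good n G" "F \<in> omega_face G"
  shows "good (Suc n) F"
  using assms(1)
proof (cases rule: good_cases)
  case (pentagon a0 a1 a2 a3 a4)
  note d = good_distinct_vertices[OF pentagon(2)]
  have "level (Cen G k) = Suc n" for k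
    using good_level_new[OF assms(1), of "Cen G 0"] by (simp add: cens_def)
  moreover have "max (level a0) (level a1) = n" "max (level a1) (level a2) = n"
    "max (level a2) (level a3) = n" "max (level a3) (level a4) = n" "max (level a4) (level a0) = n"
    "level a0 \<le> n" "level a1 \<le> n" "level a2 \<le> n" "level a3 \<le> n" "level a4 \<le> n"
    using pentagon(2) by (simp_all add: good_explicit)
  ultimately show ?thesis
    using assms(2) d distinct_rev[THEN iffD2, OF d] unfolding pentagon(1) omega_face_explicit Let_def
    by (elim insertE emptyE; simp only: good_explicit; simp add: max_def)
qed

lemma omega_face_hd_tl:
  assumes "length G = 5" "F \<in> omega_face G"
  shows "hd F \<in> set G \<union> cens G" "set (tl F) \<subseteq> mids G \<union> cens G"
proof -
  obtain a0 a1 a2 a3 a4 where G: "G = [a0,a1,a2,a3,a4]" using assms(1) by (rule length_5_cases)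
  show "hd F \<in> set G \<union> cens G" "set (tl F) \<subseteq> mids G \<union> cens G"
    using assms(2) unfolding G omega_face_explicit Let_def mids_explicit cens_explicit by auto
qed

lemma omega_face_hd_inj:
  assumes "good n G"
  shows "inj_on hd (omega_face G)"
  using assms
proof (cases rule: good_cases)
  case (pentagon a0 a1 a2 a3 a4)
  let ?m = "\<lambda>x y. Mid {|x,y|}" and ?c = "Cen G"
  let ?Fs = "[[a0, ?m a0 a1, ?c 0, ?c 4, ?m a4 a0], [a1, ?m a1 a2, ?c 1, ?c 0, ?m a0 a1],
     [a2, ?m a2 a3, ?c 2, ?c 1, ?m a1 a2], [a3, ?m a3 a4, ?c 3, ?c 2, ?m a2 a3],
     [a4, ?m a4 a0, ?c 4, ?c 3, ?m a3 a4], [?c 0, ?c 1, ?c 2, ?c 3, ?c 4]]"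
  have "omega_face G = set ?Fs" unfolding pentagon(1) omega_face_explicit Let_def by auto
  moreover have "distinct (map hd ?Fs)"
    using good_distinct_vertices[OF pentagon(2)] unfolding pentagon(1) by simp
  ultimately show ?thesis by (simp add: distinct_map)
qed

lemma omega_face_mid_tl:
  assumes "length G = 5" "F \<in> omega_face G" "Mid X \<in> set (tl F)"
  shows "hd F |\<in>| X"
proof -
  obtain a0 a1 a2 a3 a4 where G: "G = [a0,a1,a2,a3,a4]" using assms(1) by (rule length_5_cases)
  show ?thesis using assms(2,3) unfolding G omega_face_explicit Let_def by auto
qed

lemma fdoubleton_two_common:
  assumes "x |\<in>| {|p,q|}" "y |\<in>| {|p,q|}" "x |\<in>| {|r,s|}" "y |\<in>| {|r,s|}" "x \<noteq> y"
  shows "{|p,q|} = {|r,s|}"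
  using assms by (auto simp: fdoubleton_eq_iff)

lemma good_old_vertex_hd:
  assumes "good n G" "F \<in> omega_face G" "v \<in> set G" "v \<in> set F"
  shows "v = hd F"
proof (rule ccontr)
  have l: "length G = 5" using assms(1) by (rule good_length)
  assume "v \<noteq> hd F"
  moreover have "F \<noteq> []" using assms(4) by auto
  ultimately have "v \<in> set (tl F)" using assms(4) by (cases F) auto
  then have "level v = Suc n" using good_level_new[OF assms(1)] omega_face_hd_tl(2)[OF l assms(2)] by blast
  with good_level_old[OF assms(1,3)] show False by simp
qed

lemma good_mid_hd:
  assumes "good n G" "F \<in> omega_face G" "Mid X \<in> mids G" "Mid X \<in> set F"
  shows "hd F |\<in>| X"
proof -
  have l: "length G = 5" using assms(1) by (rule good_length)
  have "Mid X \<notin> set G"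
    using good_level_old[OF assms(1)] good_level_new[OF assms(1)] assms(3) by fastforce
  moreover have "Mid X \<notin> cens G" by (auto simp: cens_def)
  ultimately have "Mid X \<noteq> hd F" using omega_face_hd_tl(1)[OF l assms(2)] by force
  with assms(4) have "Mid X \<in> set (tl F)" by (cases F) auto
  then show ?thesis by (rule omega_face_mid_tl[OF l assms(2)])
qed

lemma omega_face_finite: "finite (omega_face G)"
  by (simp add: omega_face_def Let_def)

lemma good_old_vertex_one_child:
  assumes "good n G" "v \<in> set G"
  shows "card {F \<in> omega_face G. v \<in> set F} \<le> 1"
  using omega_face_finite good_old_vertex_hd[OF assms(1) _ assms(2)]
    omega_face_hd_inj[OF assms(1)]
  by (auto simp: card_le_Suc0_iff_eq inj_on_def)

lemma good_old_pair_no_child: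
  assumes "good n G" "a \<in> set G" "b \<in> set G" "a \<noteq> b" "F \<in> omega_face G"
  shows "\<not> (a \<in> set F \<and> b \<in> set F)"
  using good_old_vertex_hd[OF assms(1,5)] assms(2-4) by metis

lemma good_mid_pair_one_child:
  assumes "good n G" "a \<in> mids G" "b \<notin> insert a (cens G)"
  shows "card {F \<in> omega_face G. a \<in> set F \<and> b \<in> set F} \<le> 1"
proof -
  have l: "length G = 5" using assms(1) by (rule good_length)
  have "F1 = F2" if F: "F1 \<in> omega_face G" "F2 \<in> omega_face G"
    and ab: "a \<in> set F1" "b \<in> set F1" "a \<in> set F2" "b \<in> set F2" for F1 F2
  proof -
    have "b \<in> set G \<union> mids G"
      using omega_face_vertices[OF l F(1)] ab(2) assms(3) by blast
    then have "hd F1 = hd F2"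
    proof
      assume "b \<in> set G"
      then show ?thesis using good_old_vertex_hd[OF assms(1)] F ab by metis
    next
      assume b: "b \<in> mids G"
      \<comment> \<open>a child containing two new midpoints has the common endpoint of their edges as head\<close>
      obtain i j where X: "a = Mid {|G ! i, G ! (Suc i mod 5)|}"
        and Y: "b = Mid {|G ! j, G ! (Suc j mod 5)|}"
        using assms(2) b by (auto simp: mids_def)
      show ?thesis
      proof (rule ccontr)
        assume "hd F1 \<noteq> hd F2"
        moreover note good_mid_hd[OF assms(1), of _ "{|G ! i, G ! (Suc i mod 5)|}"]
          good_mid_hd[OF assms(1), of _ "{|G ! j, G ! (Suc j mod 5)|}"]
        ultimately have "{|G ! i, G ! (Suc i mod 5)|} = {|G ! j, G ! (Suc j mod 5)|}"
          using fdoubleton_two_common F ab assms(2) b unfolding X Y by metis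
        then show False using X Y assms(3) by simp
      qed
    qed
    then show "F1 = F2" using omega_face_hd_inj[OF assms(1)] F by (simp add: inj_on_def)
  qed
  then show ?thesis using omega_face_finite by (auto simp: card_le_Suc0_iff_eq)
qed

section \<open>Degree bounds in K_n\<close>

lemma omega_face_card: "card (omega_face G) \<le> 6"
proof -
  obtain X f where "omega_face G = insert X (f ` {0..<5::nat})"
    unfolding omega_face_def Let_def by blast
  moreover have "card (f ` {0..<5::nat}) \<le> 6 - 1" using card_image_le[of "{0..<5::nat}" f] by simp
  ultimately show ?thesis by (simp add: card_insert_le_m1)
qed

lemma card_UN_le_mult:
  assumes "finite A" "\<And>x. x \<in> A \<Longrightarrow> S x \<noteq> {} \<Longrightarrow> Q x" "\<And>x. x \<in> A \<Longrightarrow> Q x \<Longrightarrow> card (S x) \<le> c"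
  shows "card (\<Union>x\<in>A. S x) \<le> card {x \<in> A. Q x} * c"
proof -
  have "(\<Union>x\<in>A. S x) = (\<Union>x\<in>{x \<in> A. Q x}. S x)" using assms(2) by blast
  also have "card \<dots> \<le> (\<Sum>x\<in>{x \<in> A. Q x}. card (S x))" by (rule card_UN_le) (simp add: assms(1))
  also have "\<dots> \<le> card {x \<in> A. Q x} * c"
    using sum_bounded_above[of "{x \<in> A. Q x}" "\<lambda>x. card (S x)" c] assms(3) by (simp add: ball_simps)
  finally show ?thesis .
qed

lemma Kn_Suc: "Kn (Suc n) = omega (Kn n)"
  by (simp add: Kn_def)

lemma Kn_Suc_Collect: "{F \<in> Kn (Suc n). P F} = (\<Union>G\<in>Kn n. {F \<in> omega_face G. P F})"
  by (auto simp: Kn_Suc omega_def)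

lemma Kn_finite: "finite (Kn n)"
  by (induction n) (simp_all add: Kn_def Kn_Suc[unfolded Kn_def] omega_def omega_face_finite)

lemma Kn_good: "F \<in> Kn n \<Longrightarrow> good n F"
proof (induction n arbitrary: F)
  case 0
  then show ?case by (simp add: Kn_def F0_def upt_rec good_explicit)
next
  case (Suc n)
  then show ?case by (auto simp: Kn_Suc omega_def intro: omega_face_good)
qed

lemma card_omega_face_Collect_le: "card {F \<in> omega_face G. P F} \<le> 6"
  by (rule le_trans[OF card_mono[OF omega_face_finite] omega_face_card]) auto

lemma Kn_child_vertex_cases:
  assumes "G \<in> Kn n" "F \<in> omega_face G" "v \<in> set F"
  shows "level v \<le> n \<and> v \<in> set G \<or> \<not> level v \<le> n \<and> v \<in> mids G \<union> cens G"
proof -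
  have "good n G" using assms(1) by (rule Kn_good)
  then have "length G = 5" by (rule good_length)
  then have "v \<in> set G \<union> mids G \<union> cens G" using omega_face_vertices assms(2,3) by blast
  then show ?thesis using good_level_old[OF \<open>good n G\<close>] good_level_new[OF \<open>good n G\<close>] by fastforce
qed

lemma mid_parents_card:
  assumes "\<And>a b. a \<noteq> b \<Longrightarrow> card {F \<in> Kn n. a \<in> set F \<and> b \<in> set F} \<le> 6"
  shows "card {G \<in> Kn n. Mid X \<in> mids G} \<le> 6"
proof (cases "\<exists>L \<in> Kn n. Mid X \<in> mids L")
  case True
  then obtain L k where L: "L \<in> Kn n" "k < 5" "X = {|L ! k, L ! (Suc k mod 5)|}"
    by (auto simp: mids_def)
  have "good n L" using L(1) by (rule Kn_good)
  then have "L ! k \<noteq> L ! (Suc k mod 5)"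
    using L(2) by (auto simp: good_def nth_eq_iff_index_eq mod_Suc)
  have "{G \<in> Kn n. Mid X \<in> mids G} \<subseteq> {F \<in> Kn n. L ! k \<in> set F \<and> L ! (Suc k mod 5) \<in> set F}"
  proof safe
    fix G assume "G \<in> Kn n" "Mid X \<in> mids G"
    moreover have "length G = 5" using good_length[OF Kn_good[OF \<open>G \<in> Kn n\<close>]] .
    ultimately show "L ! k \<in> set G" "L ! (Suc k mod 5) \<in> set G"
      by (auto simp: mids_def L(3) fdoubleton_eq_iff)
  qed
  then have "card {G \<in> Kn n. Mid X \<in> mids G}
      \<le> card {F \<in> Kn n. L ! k \<in> set F \<and> L ! (Suc k mod 5) \<in> set F}"
    by (rule card_mono[rotated]) (simp add: Kn_finite)
  also have "\<dots> \<le> 6" by (rule assms) fact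
  finally show ?thesis .
next
  case False
  then have "{G \<in> Kn n. Mid X \<in> mids G} = {}" by blast
  then show ?thesis by (metis card.empty zero_le)
qed

lemma Kn_Suc_new_cen:
  assumes "\<not> level (Cen L k) \<le> n"
  shows "{F \<in> Kn (Suc n). Cen L k \<in> set F \<and> P F} \<subseteq> omega_face L"
proof
  fix F assume "F \<in> {F \<in> Kn (Suc n). Cen L k \<in> set F \<and> P F}"
  then obtain G where "G \<in> Kn n" "F \<in> omega_face G" "Cen L k \<in> set F"
    by (auto simp: Kn_Suc omega_def)
  then have "Cen L k \<in> mids G \<union> cens G" using Kn_child_vertex_cases assms by blast
  then have "G = L" by (auto simp: mids_def cens_def)
  with \<open>F \<in> omega_face G\<close> show "F \<in> omega_face L" by simp
qed

lemma Kn_Suc_new_cen_card: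
  assumes "\<not> level (Cen L k) \<le> n"
  shows "card {F \<in> Kn (Suc n). Cen L k \<in> set F \<and> P F} \<le> 6"
  using card_mono[OF omega_face_finite Kn_Suc_new_cen[OF assms]] omega_face_card by (rule le_trans)

lemma vertex_bound_Suc:
  assumes vertex: "\<And>v. card {F \<in> Kn n. v \<in> set F} \<le> 36"
    and pair: "\<And>a b. a \<noteq> b \<Longrightarrow> card {F \<in> Kn n. a \<in> set F \<and> b \<in> set F} \<le> 6"
  shows "card {F \<in> Kn (Suc n). v \<in> set F} \<le> 36"
proof -
  let ?S = "\<lambda>G. {F \<in> omega_face G. v \<in> set F}"
  have split: "{F \<in> Kn (Suc n). v \<in> set F} = (\<Union>G\<in>Kn n. ?S G)" by (rule Kn_Suc_Collect)
  have parent: "level v \<le> n \<and> v \<in> set G \<or> \<not> level v \<le> n \<and> v \<in> mids G \<union> cens G"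
    if "G \<in> Kn n" "?S G \<noteq> {}" for G
    using that Kn_child_vertex_cases by blast
  show ?thesis
  proof (cases "level v \<le> n")
    case True
    have "card (\<Union>G\<in>Kn n. ?S G) \<le> card {G \<in> Kn n. v \<in> set G} * 1"
    proof (rule card_UN_le_mult[OF Kn_finite])
      show "v \<in> set G" if "G \<in> Kn n" "?S G \<noteq> {}" for G using parent[OF that] True by blast
      show "card (?S G) \<le> 1" if "G \<in> Kn n" "v \<in> set G" for G
        using good_old_vertex_one_child[OF Kn_good] that .
    qed
    then show ?thesis using vertex[of v] unfolding split by linarith
  next
    case new: False
    show ?thesis
    proof (cases v)
      case (Base i)
      with new show ?thesis by simp
    next
      case (Cen L k)
      then show ?thesis using Kn_Suc_new_cen_card[of L k n "\<lambda>_. True"] new by simp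
    next
      case (Mid X)
      have "card (\<Union>G\<in>Kn n. ?S G) \<le> card {G \<in> Kn n. v \<in> mids G} * 6"
      proof (rule card_UN_le_mult[OF Kn_finite])
        show "v \<in> mids G" if "G \<in> Kn n" "?S G \<noteq> {}" for G
          using parent[OF that] new unfolding Mid cens_def by blast
      qed (rule card_omega_face_Collect_le)
      also have "\<dots> \<le> 6 * 6" using mid_parents_card[OF pair] unfolding Mid by simp
      finally show ?thesis unfolding split by simp
    qed
  qed
qed

lemma pair_bound_Suc_new_mid:
  assumes pair: "\<And>a b. a \<noteq> b \<Longrightarrow> card {F \<in> Kn n. a \<in> set F \<and> b \<in> set F} \<le> 6"
    and new: "\<not> level (Mid X) \<le> n" and "b \<noteq> Mid X"
    and not_new_cen: "level b \<le> n \<or> (\<forall>L k. b \<noteq> Cen L k)"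
  shows "card {F \<in> Kn (Suc n). Mid X \<in> set F \<and> b \<in> set F} \<le> 6"
proof -
  let ?S = "\<lambda>G. {F \<in> omega_face G. Mid X \<in> set F \<and> b \<in> set F}"
  have "card (\<Union>G\<in>Kn n. ?S G) \<le> card {G \<in> Kn n. Mid X \<in> mids G} * 1"
  proof (rule card_UN_le_mult[OF Kn_finite])
    show "Mid X \<in> mids G" if "G \<in> Kn n" "?S G \<noteq> {}" for G
    proof -
      from that(2) obtain F where "F \<in> omega_face G" "Mid X \<in> set F" by blast
      then have "Mid X \<in> mids G \<union> cens G" using Kn_child_vertex_cases[OF that(1)] new by blast
      then show ?thesis by (auto simp: cens_def)
    qed
    show "card (?S G) \<le> 1" if G: "G \<in> Kn n" "Mid X \<in> mids G" for G
    proof (rule good_mid_pair_one_child[OF Kn_good[OF G(1)] G(2)])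
      have "level b = Suc n" if "b \<in> cens G" using good_level_new[OF Kn_good[OF G(1)]] that by blast
      then show "b \<notin> insert (Mid X) (cens G)"
        using \<open>b \<noteq> Mid X\<close> not_new_cen by (auto simp: cens_def)
    qed
  qed
  also have "\<dots> \<le> 6" using mid_parents_card[OF pair] by simp
  finally show ?thesis by (simp only: Kn_Suc_Collect)
qed

lemma pair_bound_Suc_new:
  assumes pair: "\<And>a b. a \<noteq> b \<Longrightarrow> card {F \<in> Kn n. a \<in> set F \<and> b \<in> set F} \<le> 6"
    and "a \<noteq> b" and new: "\<not> level a \<le> n"
  shows "card {F \<in> Kn (Suc n). a \<in> set F \<and> b \<in> set F} \<le> 6"
proof (cases a)
  case (Base i)
  with new show ?thesis by simp
next
  case (Cen L k)
  then show ?thesis using Kn_Suc_new_cen_card[of L k n "\<lambda>F. b \<in> set F"] new by simp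
next
  case (Mid X)
  show ?thesis
  proof (cases "\<not> level b \<le> n \<and> (\<exists>L k. b = Cen L k)")
    case True
    then obtain L k where "b = Cen L k" "\<not> level (Cen L k) \<le> n" by blast
    moreover have "{F \<in> Kn (Suc n). a \<in> set F \<and> b \<in> set F} = {F \<in> Kn (Suc n). b \<in> set F \<and> a \<in> set F}"
      by blast
    ultimately show ?thesis using Kn_Suc_new_cen_card[of L k n "\<lambda>F. a \<in> set F"] by simp
  next
    case False
    then show ?thesis using pair_bound_Suc_new_mid[OF pair] new \<open>a \<noteq> b\<close> unfolding Mid by simp
  qed
qed

lemma pair_bound_Suc:
  assumes pair: "\<And>a b. a \<noteq> b \<Longrightarrow> card {F \<in> Kn n. a \<in> set F \<and> b \<in> set F} \<le> 6"
    and "a \<noteq> b"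
  shows "card {F \<in> Kn (Suc n). a \<in> set F \<and> b \<in> set F} \<le> 6"
proof -
  have swap: "{F \<in> Kn (Suc n). a \<in> set F \<and> b \<in> set F} = {F \<in> Kn (Suc n). b \<in> set F \<and> a \<in> set F}"
    by blast
  consider "\<not> level a \<le> n" | "\<not> level b \<le> n" | "level a \<le> n" "level b \<le> n" by blast
  then show ?thesis
  proof cases
    case 1
    then show ?thesis using pair_bound_Suc_new[OF pair \<open>a \<noteq> b\<close>] by blast
  next
    case 2
    then show ?thesis unfolding swap using pair_bound_Suc_new[OF pair \<open>a \<noteq> b\<close>[symmetric]] by blast
  next
    case 3
    have False if "F \<in> Kn (Suc n)" "a \<in> set F" "b \<in> set F" for F
    proof -
      from that obtain G where G: "G \<in> Kn n" "F \<in> omega_face G" by (auto simp: Kn_Suc omega_def)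
      have "a \<in> set G" "b \<in> set G"
        using Kn_child_vertex_cases[OF G] 3 that(2,3) by blast+
      with good_old_pair_no_child[OF Kn_good[OF G(1)] _ _ \<open>a \<noteq> b\<close> G(2)]
      show False using that by blast
    qed
    then have "{F \<in> Kn (Suc n). a \<in> set F \<and> b \<in> set F} = {}" by blast
    then show ?thesis by (metis card.empty zero_le)
  qed
qed

(* The bounds are crude but stable under subdivision: a new midpoint lies in at most 6 faces
   through its edge, each with at most 6 children. *)
lemma Kn_degree_bounds:
  "card {F \<in> Kn n. v \<in> set F} \<le> 36"
  "a \<noteq> b \<Longrightarrow> card {F \<in> Kn n. a \<in> set F \<and> b \<in> set F} \<le> 6"
proof -
  have "(\<forall>v. card {F \<in> Kn n. v \<in> set F} \<le> 36) \<and>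
    (\<forall>a b. a \<noteq> b \<longrightarrow> card {F \<in> Kn n. a \<in> set F \<and> b \<in> set F} \<le> 6)"
  proof (induction n)
    case 0
    have "card {F \<in> Kn 0. P F} \<le> 1" for P
      using card_mono[of "{F0}" "{F \<in> Kn 0. P F}"] by (auto simp: Kn_def)
    then show ?case by (meson le_trans one_le_numeral)
  next
    case (Suc n)
    then show ?case using vertex_bound_Suc[of n] pair_bound_Suc[of n] by simp
  qed
  then show "card {F \<in> Kn n. v \<in> set F} \<le> 36"
    "a \<noteq> b \<Longrightarrow> card {F \<in> Kn n. a \<in> set F \<and> b \<in> set F} \<le> 6" by blast+
qed

section \<open>The direct limit\<close>

lemma rho_ne_Base: "rho v \<noteq> Base i"
  by (cases v) auto

lemma map_rho_ne_F0: "map rho L \<noteq> F0"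
  using rho_ne_Base by (auto simp: F0_def upt_rec)

lemma inj_rho: "inj rho"
proof -
  have "rho x = rho y \<Longrightarrow> x = y" for x y
  proof (induction x arbitrary: y)
    case (Base i)
    then show ?case using map_rho_ne_F0[symmetric] by (cases y) auto
  next
    case (Mid S)
    then obtain T where "y = Mid T" "rho |`| S = rho |`| T" by (cases y) auto
    with Mid.IH show ?case by (metis fset.inj_map_strong)
  next
    case (Cen L k)
    then obtain L' where "y = Cen L' k" "map rho L = map rho L'"
      using map_rho_ne_F0 by (cases y) auto
    with Cen.IH show ?case by (metis list.inj_map_strong)
  qed
  then show ?thesis by (rule injI)
qed

lemma map_rho_omega_face:
  assumes "length G = 5"
  shows "map rho ` omega_face G = omega_face (map rho G)"
proof -
  obtain a0 a1 a2 a3 a4 where G: "G = [a0,a1,a2,a3,a4]" using assms by (rule length_5_cases)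
  have fimage_pair: "rho |`| {|a,b|} = {|rho a, rho b|}" for a b by simp
  show ?thesis unfolding G list.map omega_face_explicit Let_def
    by (simp only: image_insert image_empty list.map rho.simps fimage_pair)
qed

lemma Kn_map_rho: "F \<in> Kn n \<Longrightarrow> map rho F \<in> Kn (Suc n)"
proof (induction n arbitrary: F)
  case 0
  then have "F = F0" by (simp add: Kn_def)
  moreover have "map rho F0 \<in> omega_face F0"
    by (simp add: omega_face_def Let_def F0_def upt_rec)
  ultimately show ?case by (simp add: Kn_Suc Kn_def omega_def)
next
  case (Suc n)
  then obtain G where G: "G \<in> Kn n" "F \<in> omega_face G" by (auto simp: Kn_Suc omega_def)
  have "length G = 5" using good_length[OF Kn_good[OF G(1)]] .
  then have "map rho F \<in> omega_face (map rho G)" using G(2) map_rho_omega_face by blast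
  with Suc.IH[OF G(1)] show ?case by (auto simp: Kn_Suc[of "Suc n"] omega_def)
qed

lemma Kn_map_funpow_rho: "F \<in> Kn n \<Longrightarrow> map (rho ^^ k) F \<in> Kn (n + k)"
proof (induction k)
  case (Suc k)
  then show ?case using Kn_map_rho[OF Suc.IH[OF Suc.prems]] by (simp add: o_def)
qed simp

lemma Kcls_funpow_rho: "Kcls (n + k) ((rho ^^ k) u) = Kcls n u"
proof -
  have "(rho ^^ m) ((rho ^^ k) u) = (rho ^^ (n + k)) w \<longleftrightarrow> (rho ^^ m) u = (rho ^^ n) w" for m w
  proof -
    have "(rho ^^ m) ((rho ^^ k) u) = (rho ^^ k) ((rho ^^ m) u)"
      "(rho ^^ (n + k)) w = (rho ^^ k) ((rho ^^ n) w)"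
      by (metis comp_apply funpow_add add.commute)+
    then show ?thesis using inj_fn[OF inj_rho, of k] by (simp add: inj_eq)
  qed
  then show ?thesis unfolding Kcls_def lim_eq_def by auto
qed

lemma inj_Kcls: "inj (Kcls n)"
proof (rule injI)
  fix a b assume "Kcls n a = Kcls n b"
  then have "(n, b) \<in> Kcls n a" by (simp add: Kcls_def lim_eq_def)
  then have "(rho ^^ n) a = (rho ^^ n) b" by (simp add: Kcls_def lim_eq_def)
  then show "a = b" using inj_fn[OF inj_rho, of n] by (simp add: inj_eq)
qed

definition KF_at :: "nat \<Rightarrow> kvert list set" where
  "KF_at n = map (Kcls n) ` Kn n"

lemma KF_eq_Union_KF_at: "KF = (\<Union>n. KF_at n)"
  by (auto simp: KF_def KF_at_def)

lemma KF_at_mono: "m \<le> M \<Longrightarrow> KF_at m \<subseteq> KF_at M"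
proof
  fix A assume "m \<le> M" "A \<in> KF_at m"
  then obtain F where F: "F \<in> Kn m" "A = map (Kcls m) F" by (auto simp: KF_at_def)
  have "map (rho ^^ (M - m)) F \<in> Kn M"
    using Kn_map_funpow_rho[OF F(1), of "M - m"] \<open>m \<le> M\<close> by simp
  moreover have "A = map (Kcls M) (map (rho ^^ (M - m)) F)"
    using Kcls_funpow_rho[of m "M - m"] \<open>m \<le> M\<close> F(2) by simp
  ultimately show "A \<in> KF_at M" unfolding KF_at_def by (rule rev_image_eqI)
qed

lemma KF_at_vertex_card: "card {A \<in> KF_at M. x \<in> set A} \<le> 36"
proof (cases "x \<in> range (Kcls M)")
  case True
  then obtain w where x: "x = Kcls M w" by blast
  have "{A \<in> KF_at M. x \<in> set A} \<subseteq> map (Kcls M) ` {G \<in> Kn M. w \<in> set G}"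
    using inj_Kcls[of M] by (auto simp: KF_at_def x inj_eq)
  then have "card {A \<in> KF_at M. x \<in> set A} \<le> card (map (Kcls M) ` {G \<in> Kn M. w \<in> set G})"
    by (rule card_mono[rotated]) (simp add: Kn_finite)
  also have "\<dots> \<le> card {G \<in> Kn M. w \<in> set G}" by (rule card_image_le) (simp add: Kn_finite)
  also have "\<dots> \<le> 36" by (rule Kn_degree_bounds)
  finally show ?thesis .
next
  case False
  then have "{A \<in> KF_at M. x \<in> set A} = {}" by (auto simp: KF_at_def)
  then show ?thesis by (metis card.empty zero_le)
qed

lemma KF_vertex_degree: "finite {A \<in> KF. x \<in> set A}" "card {A \<in> KF. x \<in> set A} \<le> 36"
proof -
  \<comment> \<open>a finite set of faces of K already lies in the image of a single K_M\<close>
  have bound: "card T \<le> 36" if T: "finite T" "T \<subseteq> {A \<in> KF. x \<in> set A}" for T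
  proof (cases "T = {}")
    case False
    have "subset.chain UNIV (range KF_at)"
      unfolding subset.chain_def using KF_at_mono nat_le_linear by blast
    moreover have "T \<subseteq> \<Union> (range KF_at)" using T(2) KF_eq_Union_KF_at by auto
    ultimately obtain M where "T \<subseteq> KF_at M"
      using finite_subset_Union_chain[OF T(1)] by blast
    with T(2) have "T \<subseteq> {A \<in> KF_at M. x \<in> set A}" by blast
    then have "card T \<le> card {A \<in> KF_at M. x \<in> set A}"
      by (rule card_mono[rotated]) (simp add: KF_at_def Kn_finite)
    then show ?thesis using KF_at_vertex_card le_trans by blast
  qed simp
  show fin: "finite {A \<in> KF. x \<in> set A}"
  proof (rule ccontr)
    assume "infinite {A \<in> KF. x \<in> set A}"
    then obtain T where "finite T" "card T = 37" "T \<subseteq> {A \<in> KF. x \<in> set A}"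
      using infinite_arbitrarily_large by blast
    then have "card T \<le> 36" using bound by blast
    with \<open>card T = 37\<close> show False by simp
  qed
  show "card {A \<in> KF. x \<in> set A} \<le> 36" using bound[OF fin] by blast
qed

lemma KF_length: "A \<in> KF \<Longrightarrow> length A = 5"
  by (auto simp: KF_def dest: good_length[OF Kn_good])

section \<open>Patches of bounded diameter\<close>

primrec face_ball :: "kvert \<Rightarrow> nat \<Rightarrow> kvert set" where
  "face_ball u 0 = {u}"
| "face_ball u (Suc k) = face_ball u k \<union> (\<Union>x\<in>face_ball u k. \<Union>A\<in>{A \<in> KF. x \<in> set A}. set A)"

lemma face_ball_mono: "k \<le> k' \<Longrightarrow> face_ball u k \<subseteq> face_ball u k'"
  by (induction k' rule: dec_induct) auto

lemma card_face_ball: "finite (face_ball u k) \<and> card (face_ball u k) \<le> 181 ^ k"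
proof (induction k)
  case (Suc k)
  let ?B = "face_ball u k"
  let ?nbhd = "\<lambda>x. \<Union>A\<in>{A \<in> KF. x \<in> set A}. set A"
  have card_nbhd: "card (?nbhd x) \<le> 180" for x
  proof -
    have "card (?nbhd x) \<le> (\<Sum>A\<in>{A \<in> KF. x \<in> set A}. card (set A))"
      by (rule card_UN_le[OF KF_vertex_degree(1)])
    also have "\<dots> \<le> (\<Sum>A\<in>{A \<in> KF. x \<in> set A}. 5)"
      by (rule sum_mono) (metis (mono_tags) KF_length card_length mem_Collect_eq)
    also have "\<dots> \<le> 5 * 36" using KF_vertex_degree(2)[of x] by simp
    finally show ?thesis by simp
  qed
  have "card (\<Union>x\<in>?B. ?nbhd x) \<le> (\<Sum>x\<in>?B. card (?nbhd x))"
    using Suc.IH by (intro card_UN_le) blast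
  also have "\<dots> \<le> (\<Sum>x\<in>?B. 180)" by (rule sum_mono) (rule card_nbhd)
  finally have "card (face_ball u (Suc k)) \<le> 181 * card ?B"
    using card_Un_le[of ?B "\<Union>x\<in>?B. ?nbhd x"] by simp
  moreover have "finite (\<Union>x\<in>?B. ?nbhd x)" using Suc.IH KF_vertex_degree(1) by simp
  ultimately show ?case using Suc.IH by simp
qed simp

lemma KE_in_face: "{a,b} \<in> KE \<Longrightarrow> \<exists>A\<in>KF. a \<in> set A \<and> b \<in> set A"
proof -
  assume "{a,b} \<in> KE"
  then obtain A i where A: "A \<in> KF" "i < 5" "{a,b} = {A ! i, A ! ((i + 1) mod 5)}"
    unfolding KE_def face_edges_def by blast
  then have "{a,b} \<subseteq> set A" using KF_length[OF A(1)] by auto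
  with A(1) show ?thesis by blast
qed

lemma kwalk_nth_in_face_ball:
  assumes "kwalk xs" "xs \<noteq> []" "i < length xs"
  shows "xs ! i \<in> face_ball (hd xs) i"
  using assms(3)
proof (induction i)
  case 0
  then show ?case using assms(2) by (simp add: hd_conv_nth)
next
  case (Suc i)
  then have "{xs ! i, xs ! Suc i} \<in> KE" using assms(1) by (simp add: kwalk_def)
  with Suc show ?case using KE_in_face by fastforce
qed

definition KE_rel :: "(kvert \<times> kvert) set" where
  "KE_rel = {(x,y). {x,y} \<in> KE}"

lemma KE_rel_sym: "sym KE_rel"
  by (auto simp: KE_rel_def sym_def insert_commute)

lemma kwalk_if_KE_rel:
  "(x,y) \<in> KE_rel\<^sup>* \<Longrightarrow> \<exists>xs. kwalk xs \<and> xs \<noteq> [] \<and> hd xs = x \<and> last xs = y"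
proof (induction rule: rtrancl_induct)
  case base
  show ?case by (rule exI[of _ "[x]"]) (simp add: kwalk_def)
next
  case (step y z)
  then obtain xs where xs: "kwalk xs" "xs \<noteq> []" "hd xs = x" "last xs = y" by blast
  have "kwalk (xs @ [z])" unfolding kwalk_def
  proof (intro allI impI)
    fix i assume i: "Suc i < length (xs @ [z])"
    show "{(xs @ [z]) ! i, (xs @ [z]) ! Suc i} \<in> KE"
    proof (cases "Suc i < length xs")
      case True
      then show ?thesis using xs(1) by (simp add: kwalk_def nth_append)
    next
      case False
      with i have len: "Suc i = length xs" by simp
      then have "xs ! i = y" using xs(2,4) by (metis last_conv_nth diff_Suc_1)
      with len step(2) show ?thesis by (simp add: KE_rel_def nth_append)
    qed
  qed
  with xs show ?case by (intro exI[of _ "xs @ [z]"]) simp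
qed

lemma kdist_in_face_ball:
  assumes "(u,w) \<in> KE_rel\<^sup>*"
  shows "w \<in> face_ball u (kdist u w)"
proof -
  let ?P = "\<lambda>k. \<exists>xs. kwalk xs \<and> xs \<noteq> [] \<and> hd xs = u \<and> last xs = w \<and> length xs = Suc k"
  obtain xs where "kwalk xs" "xs \<noteq> []" "hd xs = u" "last xs = w"
    using kwalk_if_KE_rel[OF assms] by blast
  then have "?P (length xs - 1)" by (intro exI[of _ xs]) auto
  then have "?P (kdist u w)" unfolding kdist_def by (rule LeastI)
  then obtain ys where ys: "kwalk ys" "ys \<noteq> []" "hd ys = u" "last ys = w" "length ys = Suc (kdist u w)"
    by blast
  then have "last ys = ys ! kdist u w" by (simp add: last_conv_nth)
  with kwalk_nth_in_face_ball[OF ys(1,2), of "kdist u w"] ys show ?thesis by simp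
qed

lemma KF_vertices_connected:
  assumes "A \<in> KF" "x \<in> set A" "y \<in> set A"
  shows "(x, y) \<in> KE_rel\<^sup>*"
proof -
  have from_first: "(A ! 0, A ! i) \<in> KE_rel\<^sup>*" if "i < 5" for i
    using that
  proof (induction i)
    case (Suc i)
    then have "{A ! i, A ! Suc i} \<in> KE"
      using assms(1) unfolding KE_def face_edges_def by fastforce
    then have "(A ! i, A ! Suc i) \<in> KE_rel" by (simp add: KE_rel_def)
    with Suc show ?case by (simp add: rtrancl.rtrancl_into_rtrancl)
  qed simp
  obtain i j where "i < 5" "x = A ! i" "j < 5" "y = A ! j"
    using assms(2,3) KF_length[OF assms(1)] by (metis in_set_conv_nth)
  moreover have "sym (KE_rel\<^sup>*)" using KE_rel_sym by (rule sym_rtrancl)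
  ultimately have "(x, A ! 0) \<in> KE_rel\<^sup>*" "(A ! 0, y) \<in> KE_rel\<^sup>*"
    using from_first by (auto dest: symD)
  then show ?thesis by (rule rtrancl_trans)
qed

lemma patch_vertices_connected:
  assumes P: "patch P" and "x \<in> pverts P" "y \<in> pverts P"
  shows "(x, y) \<in> KE_rel\<^sup>*"
proof -
  obtain A B where AB: "A \<in> P" "B \<in> P" "x \<in> set A" "y \<in> set B"
    using assms(2,3) by (auto simp: pverts_def)
  have KF: "P \<subseteq> KF" using P by (simp add: patch_def)
  have "(A, B) \<in> {(X, Y). X \<in> P \<and> Y \<in> P \<and> face_adj X Y}\<^sup>*"
    using P AB(1,2) by (simp add: patch_def)
  then show ?thesis using AB(4)
  proof (induction arbitrary: y rule: rtrancl_induct)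
    case base
    then show ?case using KF_vertices_connected KF AB(1,3) by blast
  next
    case (step B' B)
    then have B': "B' \<in> P" "B \<in> P" "face_adj B' B" by auto
    then obtain i j where "i < 5" "j < 5"
      "{B' ! i, B' ! ((i + 1) mod 5)} = {B ! j, B ! ((j + 1) mod 5)}"
      unfolding face_adj_def face_edges_def by blast
    moreover have "length B' = 5" "length B = 5" using KF B'(1,2) KF_length by blast+
    ultimately have "B' ! i \<in> set B'" "B' ! i \<in> set B"
      by (auto simp: doubleton_eq_iff)
    then show ?case
      using step.IH KF_vertices_connected KF B'(2) step.prems by (blast intro: rtrancl_trans)
  qed
qed

lemma patch_card_pverts:
  assumes "patch P" "ediam_lt P r"
  shows "finite (pverts P) \<and> card (pverts P) \<le> 181 ^ nat \<lceil>r\<rceil>"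
proof -
  obtain A where A: "A \<in> P" "A \<in> KF" using assms(1) by (auto simp: patch_def)
  define u where "u = A ! 0"
  have "u \<in> set A" using KF_length[OF A(2)] by (simp add: u_def)
  with A(1) have u: "u \<in> pverts P" by (auto simp: pverts_def)
  have "pverts P \<subseteq> face_ball u (nat \<lceil>r\<rceil>)"
  proof
    fix w assume w: "w \<in> pverts P"
    have "real (kdist u w) < r" using assms(2) u w by (simp add: ediam_lt_def)
    then have "face_ball u (kdist u w) \<subseteq> face_ball u (nat \<lceil>r\<rceil>)"
      by (intro face_ball_mono) linarith
    with kdist_in_face_ball[OF patch_vertices_connected[OF assms(1) u w]]
    show "w \<in> face_ball u (nat \<lceil>r\<rceil>)" by blast
  qed
  moreover have "finite (face_ball u (nat \<lceil>r\<rceil>))" "card (face_ball u (nat \<lceil>r\<rceil>)) \<le> 181 ^ nat \<lceil>r\<rceil>"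
    using card_face_ball by blast+
  ultimately show ?thesis using card_mono[of "face_ball u (nat \<lceil>r\<rceil>)" "pverts P"]
    by (simp add: finite_subset)
qed

lemma face_edges_eq_image: "face_edges A = (\<lambda>i. {A ! i, A ! ((i + 1) mod 5)}) ` {..<5}"
  unfolding face_edges_def by auto

lemma face_edges_map:
  assumes "length A = 5"
  shows "(\<lambda>e. f ` e) ` face_edges A = face_edges (map f A)"
  unfolding face_edges_eq_image image_image using assms by (intro image_cong) simp_all

definition vertex_enum :: "kvert list set \<Rightarrow> kvert \<Rightarrow> nat" where
  "vertex_enum P = (SOME g. bij_betw g (pverts P) {..<card (pverts P)})"

definition patch_code :: "kvert list set \<Rightarrow> nat list set" where
  "patch_code P = map (vertex_enum P) ` P"

lemma bij_betw_vertex_enum: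
  assumes "finite (pverts P)"
  shows "bij_betw (vertex_enum P) (pverts P) {..<card (pverts P)}"
proof -
  have "\<exists>g. bij_betw g (pverts P) {..<card (pverts P)}"
    using ex_bij_betw_finite_nat[OF assms] by (simp add: atLeast0LessThan)
  then show ?thesis unfolding vertex_enum_def by (rule someI_ex)
qed

lemma patch_code_vertices: "\<Union> (set ` patch_code P) = vertex_enum P ` pverts P"
  unfolding patch_code_def pverts_def by auto

lemma patch_code_eq_imp_patch_iso:
  assumes "finite (pverts P)" "finite (pverts Q)" "patch_code P = patch_code Q"
    and "\<forall>A\<in>P. length A = 5"
  shows "patch_iso P Q"
proof -
  let ?g = "vertex_enum P" and ?h = "vertex_enum Q"
  have g: "bij_betw ?g (pverts P) {..<card (pverts P)}"
    and h: "bij_betw ?h (pverts Q) {..<card (pverts Q)}"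
    using assms(1,2) by (simp_all add: bij_betw_vertex_enum)
  have "{..<card (pverts P)} = {..<card (pverts Q)}"
    using patch_code_vertices[of P] patch_code_vertices[of Q] assms(3) g h by (simp add: bij_betw_def)
  with h have h': "bij_betw ?h (pverts Q) {..<card (pverts P)}" by simp
  define f where "f = inv_into (pverts Q) ?h \<circ> ?g"
  have f: "bij_betw f (pverts P) (pverts Q)"
    unfolding f_def by (rule bij_betw_trans[OF g bij_betw_inv_into[OF h']])
  have inv_h: "map (inv_into (pverts Q) ?h) (map ?h B) = B" if "B \<in> Q" for B
  proof -
    have "set B \<subseteq> pverts Q" using that by (auto simp: pverts_def)
    moreover have "inj_on ?h (pverts Q)" using h by (simp add: bij_betw_def)
    ultimately show ?thesis by (simp add: map_idI subset_iff)
  qed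
  have faces: "map f ` P = Q"
  proof -
    have "map f ` P = map (inv_into (pverts Q) ?h) ` map ?g ` P"
      by (simp add: f_def image_image)
    also have "map ?g ` P = map ?h ` Q" using assms(3) by (simp add: patch_code_def)
    finally show ?thesis using inv_h by (force simp: image_image)
  qed
  have "(\<lambda>e. f ` e) ` pedges P = (\<Union>A\<in>P. (\<lambda>e. f ` e) ` face_edges A)"
    unfolding pedges_def by auto
  also have "\<dots> = pedges Q"
    using face_edges_map assms(4) unfolding pedges_def faces[symmetric] by simp
  finally have "(\<lambda>e. f ` e) ` pedges P = pedges Q" .
  moreover have "(\<lambda>A. f ` set A) ` P = set ` Q"
    unfolding faces[symmetric] by (simp add: image_image)
  ultimately show ?thesis using f unfolding patch_iso_def by blast
qed

lemma patch_faces_length: "patch P \<Longrightarrow> A \<in> P \<Longrightarrow> length A = 5"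
  using KF_length by (auto simp: patch_def)

lemma patch_code_bounded:
  assumes "patch P" "ediam_lt P r"
  shows "patch_code P \<subseteq> {xs. set xs \<subseteq> {..<181 ^ nat \<lceil>r\<rceil>} \<and> length xs = 5}"
proof
  fix c assume "c \<in> patch_code P"
  then obtain A where A: "A \<in> P" "c = map (vertex_enum P) A" by (auto simp: patch_code_def)
  have fin: "finite (pverts P)" and card: "card (pverts P) \<le> 181 ^ nat \<lceil>r\<rceil>"
    using patch_card_pverts[OF assms] by blast+
  have "set A \<subseteq> pverts P" using A(1) by (auto simp: pverts_def)
  then have "set c \<subseteq> {..<card (pverts P)}"
    using bij_betw_vertex_enum[OF fin] A(2) by (auto simp: bij_betw_def)
  with card have "set c \<subseteq> {..<181 ^ nat \<lceil>r\<rceil>}" by auto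
  moreover have "length c = 5" using A patch_faces_length[OF assms(1)] by simp
  ultimately show "c \<in> {xs. set xs \<subseteq> {..<181 ^ nat \<lceil>r\<rceil>} \<and> length xs = 5}" by simp
qed

lemma finite_patch_codes: "finite (patch_code ` {P. patch P \<and> ediam_lt P r})"
proof (rule finite_subset)
  show "patch_code ` {P. patch P \<and> ediam_lt P r}
      \<subseteq> Pow {xs :: nat list. set xs \<subseteq> {..<181 ^ nat \<lceil>r\<rceil>} \<and> length xs = 5}"
    using patch_code_bounded by blast
  show "finite (Pow {xs :: nat list. set xs \<subseteq> {..<181 ^ nat \<lceil>r\<rceil>} \<and> length xs = 5})"
    by (simp add: finite_lists_length_eq)
qed

theorem theoremt:
  fixes r :: real
  assumes "r > 0"
  shows "\<exists>S. finite S \<and> (\<forall>Q\<in>S. patch Q \<and> ediam_lt Q r) \<and>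
           (\<forall>P. patch P \<and> ediam_lt P r \<longrightarrow> (\<exists>Q\<in>S. patch_iso P Q))"
proof -
  define Pat where "Pat = {P. patch P \<and> ediam_lt P r}"
  define rep where "rep c = (SOME P. P \<in> Pat \<and> patch_code P = c)" for c
  have rep: "rep (patch_code P) \<in> Pat" "patch_code (rep (patch_code P)) = patch_code P" if "P \<in> Pat" for P
    using someI[of "\<lambda>Q. Q \<in> Pat \<and> patch_code Q = patch_code P", OF conjI[OF that refl]]
    by (simp_all add: rep_def)
  have iso: "patch_iso P (rep (patch_code P))" if "P \<in> Pat" for P
    using rep[OF that] that patch_card_pverts patch_faces_length
    by (intro patch_code_eq_imp_patch_iso) (auto simp: Pat_def)
  let ?S = "rep ` patch_code ` Pat"
  have "finite ?S" using finite_patch_codes by (simp add: Pat_def)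
  moreover have "\<forall>Q\<in>?S. patch Q \<and> ediam_lt Q r" using rep by (auto simp: Pat_def)
  moreover have "\<forall>P. patch P \<and> ediam_lt P r \<longrightarrow> (\<exists>Q\<in>?S. patch_iso P Q)"
    using iso by (auto simp: Pat_def)
  ultimately show ?thesis by blast
qed

end
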